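(* Let $G$ be a simple, undirected, unweighted, locally finite graph and $i\sim j$ an edge with $d_i\le d_j$. Suppose $\mathrm{Ric}(i,j)\le -2+\delta$ for some $0<\delta<(1+\gamma_{\max}(i,j))^{-1}$. Then $$\frac{|Q_j|}{|\sharp_\Delta|+1}>\delta^{-1}.$$
   Context: For an edge $i\sim j$ with degrees $d_i,d_j$ and neighbour sets $S_1(\cdot)$: $\sharp_\Delta=S_1(i)\cap S_1(j)$; $\sharp_\square^i=\{k\in S_1(i)\setminus (S_1(j)\cup\{j\}) : \exists\, w\in (S_1(k)\cap S_1(j))\setminus (S_1(i)\cup\{i\})\}$, $\sharp_\square^j$ symmetric; $\gamma_{\max}=\max\big\{\max_{k\in\sharp_\square^i}|(S_1(k)\cap S_1(j))\setminus(S_1(i)\cup\{i\})|,\ \max_{w\in\sharp_\square^j}|(S_1(w)\cap S_1(i))\setminus(S_1(j)\cup\{j\})|\big\}$, with the convention $\gamma_{\max}=0$ when $\sharp_\square^i=\emptyset$. $Q_j=S_1(j)\setminus(\{i\}\cup\sharp_\Delta\cup\sharp_\square^j)$. Balanced Forman curvature: $\mathrm{Ric}(i,j)=0$ if $\min\{d_i,d_j\}=1$, otherwise $\mathrm{Ric}(i,j)=\frac{2}{d_i}+\frac{2}{d_j}-2+\frac{2|\sharp_\Delta|}{\max\{d_i,d_j\}}+\frac{|\sharp_\Delta|}{\min\{d_i,d_j\}}+\frac{\gamma_{\max}^{-1}}{\max\{d_i,d_j\}}(|\sharp_\square^i|+|\sharp_\square^j|)$, the last term being $0$ when $\sharp_\square^i=\emptyset$.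 *)

theory Defs
  imports Main "HOL-Library.Extended_Real"
begin

definition simple_graph :: "('a \<Rightarrow> 'a \<Rightarrow> bool) \<Rightarrow> bool" where
  "simple_graph E \<longleftrightarrow> (\<forall>x y. E x y \<longrightarrow> E y x) \<and> (\<forall>x. \<not> E x x)"

definition S1 :: "('a \<Rightarrow> 'a \<Rightarrow> bool) \<Rightarrow> 'a \<Rightarrow> 'a set" where
  "S1 E x = {y. E x y}"

definition locally_finite :: "('a \<Rightarrow> 'a \<Rightarrow> bool) \<Rightarrow> bool" where
  "locally_finite E \<longleftrightarrow> (\<forall>x. finite (S1 E x))"

definition deg :: "('a \<Rightarrow> 'a \<Rightarrow> bool) \<Rightarrow> 'a \<Rightarrow> nat" where
  "deg E x = card (S1 E x)"

definition sharp_tri :: "('a \<Rightarrow> 'a \<Rightarrow> bool) \<Rightarrow> 'a \<Rightarrow> 'a \<Rightarrow> 'a set" where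
  "sharp_tri E i j = S1 E i \<inter> S1 E j"

definition sq_partners :: "('a \<Rightarrow> 'a \<Rightarrow> bool) \<Rightarrow> 'a \<Rightarrow> 'a \<Rightarrow> 'a \<Rightarrow> 'a set" where
  "sq_partners E i j k = (S1 E k \<inter> S1 E j) - (S1 E i \<union> {i})"

text \<open>sharp_sq E i j is \<sharp>_\<square>^i for the edge i~j; \<sharp>_\<square>^j is sharp_sq E j i.\<close>
definition sharp_sq :: "('a \<Rightarrow> 'a \<Rightarrow> bool) \<Rightarrow> 'a \<Rightarrow> 'a \<Rightarrow> 'a set" where
  "sharp_sq E i j = {k \<in> S1 E i - (S1 E j \<union> {j}). sq_partners E i j k \<noteq> {}}"

definition gamma_max :: "('a \<Rightarrow> 'a \<Rightarrow> bool) \<Rightarrow> 'a \<Rightarrow> 'a \<Rightarrow> nat" where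
  "gamma_max E i j =
     (if sharp_sq E i j = {} then 0
      else max (Max ((\<lambda>k. card (sq_partners E i j k)) ` sharp_sq E i j))
               (Max ((\<lambda>w. card (sq_partners E j i w)) ` sharp_sq E j i)))"

definition Q_set :: "('a \<Rightarrow> 'a \<Rightarrow> bool) \<Rightarrow> 'a \<Rightarrow> 'a \<Rightarrow> 'a set" where
  "Q_set E i j = S1 E j - ({i} \<union> sharp_tri E i j \<union> sharp_sq E j i)"

text \<open>Balanced Forman curvature of the edge i~j.\<close>
definition Ric :: "('a \<Rightarrow> 'a \<Rightarrow> bool) \<Rightarrow> 'a \<Rightarrow> 'a \<Rightarrow> real" where
  "Ric E i j =
    (let di = real (deg E i); dj = real (deg E j); t = real (card (sharp_tri E i j))
     in if min di dj = 1 then 0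
        else 2 / di + 2 / dj - 2 + 2 * t / max di dj + t / min di dj
             + (if sharp_sq E i j = {} then 0
                else (inverse (real (gamma_max E i j)) / max di dj)
                     * (real (card (sharp_sq E i j)) + real (card (sharp_sq E j i)))))"

end

theory Submission
  imports Defs
begin

text \<open>Multiplying the curvature bound by \<open>d\<^sub>j\<close> and using \<open>d\<^sub>i \<le> d\<^sub>j\<close> gives
  \<open>4 + 3|\<sharp>\<^sub>\<Delta>| + |\<sharp>\<^sub>\<square>\<^sup>j|/\<gamma>\<^sub>m\<^sub>a\<^sub>x \<le> \<delta> d\<^sub>j\<close>. Since \<open>S\<^sub>1(j)\<close> is the disjoint union of \<open>{i}\<close>,
  \<open>\<sharp>\<^sub>\<Delta>\<close>, \<open>\<sharp>\<^sub>\<square>\<^sup>j\<close> and \<open>Q\<^sub>j\<close>, this bounds \<open>1 + |\<sharp>\<^sub>\<Delta>| + |\<sharp>\<^sub>\<square>\<^sup>j|\<close> by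
  \<open>(1 + \<gamma>\<^sub>m\<^sub>a\<^sub>x)(\<delta> d\<^sub>j - |\<sharp>\<^sub>\<Delta>| - 1)\<close>, and \<open>\<delta>(1 + \<gamma>\<^sub>m\<^sub>a\<^sub>x) < 1\<close> turns this into
  \<open>\<delta> |Q\<^sub>j| > |\<sharp>\<^sub>\<Delta>| + 1\<close>.\<close>

lemma simple_graph_sym: "simple_graph E \<Longrightarrow> E x y \<Longrightarrow> E y x"
  and simple_graph_irrefl: "simple_graph E \<Longrightarrow> \<not> E x x"
  unfolding simple_graph_def by blast+

lemma locally_finite_S1: "locally_finite E \<Longrightarrow> finite (S1 E x)"
  unfolding locally_finite_def by blast

lemma deg_ge_1:
  assumes "locally_finite E" "E i j"
  shows "1 \<le> deg E i"
  using assms locally_finite_S1[OF assms(1), of i]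
  unfolding deg_def S1_def by (auto simp: Suc_le_eq card_gt_0_iff)

lemma sharp_sq_nonempty_swap:
  assumes "simple_graph E" "sharp_sq E j i \<noteq> {}"
  shows "sharp_sq E i j \<noteq> {}"
proof -
  obtain k w where k: "k \<in> sharp_sq E j i" and w: "w \<in> sq_partners E j i k"
    using assms(2) unfolding sharp_sq_def by blast
  have "w \<in> sharp_sq E i j" and "k \<in> sq_partners E i j w"
    using k w simple_graph_sym[OF assms(1)]
    unfolding sharp_sq_def sq_partners_def S1_def by auto
  then show ?thesis by blast
qed

lemma gamma_max_pos:
  assumes "locally_finite E" "sharp_sq E i j \<noteq> {}"
  shows "0 < gamma_max E i j"
proof -
  obtain k where k: "k \<in> sharp_sq E i j" using assms(2) by blast
  have "finite (sharp_sq E i j)"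
    using locally_finite_S1[OF assms(1), of i] unfolding sharp_sq_def by auto
  then have "card (sq_partners E i j k) \<le> Max ((\<lambda>k. card (sq_partners E i j k)) ` sharp_sq E i j)"
    using k by (intro Max_ge) auto
  moreover have "0 < card (sq_partners E i j k)"
    using k locally_finite_S1[OF assms(1), of j]
    unfolding sharp_sq_def sq_partners_def by (auto simp: card_gt_0_iff)
  ultimately show ?thesis using assms(2) unfolding gamma_max_def by auto
qed

lemma card_Q_set:
  assumes "simple_graph E" "locally_finite E" "E i j"
  shows "card (Q_set E i j) + 1 + card (sharp_tri E i j) + card (sharp_sq E j i) = deg E j"
proof -
  let ?U = "{i} \<union> sharp_tri E i j \<union> sharp_sq E j i"
  have fin: "finite (S1 E j)" using locally_finite_S1[OF assms(2)] .
  have sub: "?U \<subseteq> S1 E j"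
    using simple_graph_sym[OF assms(1,3)] unfolding sharp_tri_def sharp_sq_def S1_def by auto
  have "i \<notin> sharp_tri E i j \<union> sharp_sq E j i"
    using simple_graph_irrefl[OF assms(1)] unfolding sharp_tri_def sharp_sq_def S1_def by auto
  moreover have "sharp_tri E i j \<inter> sharp_sq E j i = {}"
    unfolding sharp_tri_def sharp_sq_def by auto
  moreover have "finite (sharp_tri E i j)" "finite (sharp_sq E j i)"
    using sub fin by (auto intro: finite_subset)
  ultimately have "card ?U = 1 + card (sharp_tri E i j) + card (sharp_sq E j i)"
    by (simp add: card_Un_disjoint Un_assoc)
  moreover have "card (Q_set E i j) + card ?U = card (S1 E j)"
    unfolding Q_set_def using card_Diff_subset[OF finite_subset[OF sub fin] sub]
      card_mono[OF fin sub] by simp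
  ultimately show ?thesis unfolding deg_def by simp
qed

lemma deg_mult_Ric_plus_2_ge:
  assumes "simple_graph E" "2 \<le> deg E i" "deg E i \<le> deg E j"
  defines "t \<equiv> real (card (sharp_tri E i j))"
    and "s \<equiv> real (card (sharp_sq E j i))"
    and "dj \<equiv> real (deg E j)"
  shows "4 + 3 * t + s / real (gamma_max E i j) \<le> dj * (Ric E i j + 2)"
proof -
  define di where "di = real (deg E i)"
  define X where "X = (if sharp_sq E i j = {} then 0
      else inverse (real (gamma_max E i j)) / dj * (real (card (sharp_sq E i j)) + s))"
  have di: "2 \<le> di" "di \<le> dj" using assms(2,3) unfolding di_def dj_def by simp_all
  have "Ric E i j = 2/di + 2/dj - 2 + 2*t/dj + t/di + X"
    using di unfolding Ric_def Let_def X_def di_def dj_def t_def s_def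
    by (simp add: min_def max_def)
  then have "dj * (Ric E i j + 2) = 2 + 2*t + dj*(2+t)/di + dj*X"
    using di by (simp add: field_simps)
  moreover have "2 + t \<le> dj*(2+t)/di"
  proof -
    have "(2+t) * di \<le> (2+t) * dj" using di by (simp add: t_def mult_left_mono)
    then show ?thesis using di by (simp add: field_simps)
  qed
  moreover have "s / real (gamma_max E i j) \<le> dj*X"
  proof (cases "sharp_sq E i j = {}")
    case True
    then have "sharp_sq E j i = {}" using sharp_sq_nonempty_swap[OF assms(1)] by blast
    then show ?thesis using True unfolding s_def X_def by simp
  next
    case False
    then have "dj*X = (real (card (sharp_sq E i j)) + s) / real (gamma_max E i j)"
      using di unfolding X_def by (simp add: divide_inverse)
    then show ?thesis by (simp add: divide_right_mono)
  qed
  ultimately show ?thesis by linarith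
qed

lemma ratio_gt_inverse:
  fixes \<delta> g t s d :: real
  assumes "0 < \<delta>" "\<delta> * (1 + g) < 1" "0 \<le> g" "0 \<le> t" "0 \<le> s" "g = 0 \<Longrightarrow> s = 0"
    and "4 + 3 * t + s / g \<le> \<delta> * d"
  shows "inverse \<delta> < (d - 1 - t - s) / (t + 1)"
proof -
  have "s \<le> g * (\<delta> * d - t - 1)"
  proof (cases "g = 0")
    case False
    then have "s \<le> g * (\<delta> * d - 3 * t - 4)"
      using assms(3,7) by (simp add: field_simps)
    then show ?thesis using assms(3,4) by (smt (verit) mult_left_mono)
  qed (use assms(6) in simp)
  moreover have "1 + t \<le> \<delta> * d - t - 1"
    using assms(3,4,5,7) by (smt (verit) divide_nonneg_nonneg)
  ultimately have "1 + t + s \<le> (1 + g) * (\<delta> * d - t - 1)"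
    by (simp add: algebra_simps)
  then have "\<delta> * (1 + t + s) \<le> (\<delta> * (1 + g)) * (\<delta> * d - t - 1)"
    using assms(1) by (metis less_imp_le mult.assoc mult_left_mono)
  also have "\<dots> < \<delta> * d - t - 1"
    using assms(2,4) \<open>1 + t \<le> \<delta> * d - t - 1\<close> by simp
  finally show ?thesis using assms(1,4) by (simp add: field_simps)
qed

theorem mainTheorem7:
  fixes E :: "'a \<Rightarrow> 'a \<Rightarrow> bool" and i j :: 'a and \<delta> :: real
  assumes "simple_graph E"
    and "locally_finite E"
    and "E i j"
    and "deg E i \<le> deg E j"
    and "Ric E i j \<le> -2 + \<delta>"
    and "0 < \<delta>"
    and "\<delta> < inverse (1 + real (gamma_max E i j))"
  shows "real (card (Q_set E i j)) / (real (card (sharp_tri E i j)) + 1) > inverse \<delta>"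
proof -
  have \<delta>_gamma: "\<delta> * (1 + real (gamma_max E i j)) < 1"
    using assms(7) by (simp add: field_simps)
  moreover have "\<delta> \<le> \<delta> * (1 + real (gamma_max E i j))"
    using assms(6) by simp
  ultimately have "Ric E i j < 0" using assms(5) by linarith
  moreover have "deg E i = 1 \<Longrightarrow> Ric E i j = 0"
    using assms(4) unfolding Ric_def Let_def by (simp add: min_def)
  ultimately have "2 \<le> deg E i" using deg_ge_1[OF assms(2,3)] by fastforce
  with assms(1,4) have "4 + 3 * real (card (sharp_tri E i j))
      + real (card (sharp_sq E j i)) / real (gamma_max E i j) \<le> \<delta> * real (deg E j)"
    using deg_mult_Ric_plus_2_ge[of E i j] assms(5)
    by (smt (verit) mult_left_mono of_nat_0_le_iff mult.commute)
  moreover have "gamma_max E i j = 0 \<Longrightarrow> card (sharp_sq E j i) = 0"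
    using gamma_max_pos[OF assms(2)] sharp_sq_nonempty_swap[OF assms(1)]
      locally_finite_S1[OF assms(2), of j] unfolding sharp_sq_def by fastforce
  ultimately have "inverse \<delta> < (real (deg E j) - 1 - real (card (sharp_tri E i j))
      - real (card (sharp_sq E j i))) / (real (card (sharp_tri E i j)) + 1)"
    by (intro ratio_gt_inverse[OF assms(6) \<delta>_gamma]) auto
  also have "real (deg E j) - 1 - real (card (sharp_tri E i j)) - real (card (sharp_sq E j i))
      = real (card (Q_set E i j))"
    using card_Q_set[OF assms(1-3)] by (simp flip: of_nat_add)
  finally show ?thesis .
qed

end
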